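(* Let $\theta>-1$, $\beta>0$, and let $\mathscr{L}_i^{(\theta,\beta)}$, $i=0,1,2,\dots$, denote the generalized Laguerre polynomials $$\mathscr{L}_i^{(\theta,\beta)}(x)=\frac{1}{i!}x^{-\theta}e^{\beta x}\frac{d^i}{dx^i}\big(x^{i+\theta}e^{-\beta x}\big).$$ Let $n$ be a positive integer and let $\varrho:(0,\infty)\to\mathbb{R}$ be a function with $n-1<\varrho_{\min}<\varrho(x)<\varrho_{\max}<n$ for all $x>0$, for some constants $\varrho_{\min},\varrho_{\max}$. For $x>0$ and $i\ge 0$ define $$\hat{\mathscr{L}}_i^{(\varrho(x),\theta,\beta)}(x)=\frac{1}{\Gamma(\varrho(x))}\int_0^x (x-t)^{\varrho(x)-1}\mathscr{L}_i^{(\theta,\beta)}(t)\,dt .$$ Then for all $x>0$: $$\hat{\mathscr{L}}_0^{(\varrho(x),\theta,\beta)}(x)=\frac{x^{\varrho(x)}}{\Gamma(\varrho(x)+1)},\qquad \hat{\mathscr{L}}_1^{(\varrho(x),\theta,\beta)}(x)=\frac{(\theta+1)\,x^{\varrho(x)}}{\Gamma(\varrho(x)+1)}-\frac{\beta x^{\varrho(x)+1}}{\Gamma(\varrho(x)+2)},$$ and for every $i\ge 1$, $$\hat{\mathscr{L}}_{i+1}^{(\varrho(x),\theta,\beta)}(x)=\frac{1}{i+\varrho(x)+1}\Big\{(2i+\theta+\varrho(x)+1-\beta x)\,\hat{\mathscr{L}}_i^{(\varrho(x),\theta,\beta)}(x)-(i+\theta)\,\hat{\mathscr{L}}_{i-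1}^{(\varrho(x),\theta,\beta)}(x)-\frac{x^{\varrho(x)}}{\Gamma(\varrho(x))}\big(\mathscr{L}_i^{(\theta,\beta)}(0)-\mathscr{L}_{i+1}^{(\theta,\beta)}(0)\big)\Big\}.$$
   Context: $\hat{\mathscr{L}}_i^{(\varrho(x),\theta,\beta)}(x)$ is the variable-order (type I, Riemann–Liouville-type) fractional integral of order $\varrho(x)$ of $\mathscr{L}_i^{(\theta,\beta)}$, where the order $\varrho(x)$ is frozen at the outer variable $x$. The generalized Laguerre polynomials satisfy $\mathscr{L}_0^{(\theta,\beta)}=1$, $\mathscr{L}_1^{(\theta,\beta)}(x)=\theta+1-\beta x$, and are orthogonal on $(0,\infty)$ with respect to the weight $x^\theta e^{-\beta x}$. *)

theory Defs
  imports "HOL-Analysis.Analysis" "HOL-Computational_Algebra.Polynomial"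
begin

definition laguerre_rodrigues :: "real \<Rightarrow> real \<Rightarrow> nat \<Rightarrow> real \<Rightarrow> real" where
  "laguerre_rodrigues \<theta> \<beta> i x =
     (1 / fact i) * x powr (-\<theta>) * exp (\<beta> * x) *
     (deriv ^^ i) (\<lambda>t. t powr (real i + \<theta>) * exp (- \<beta> * t)) x"

text \<open>The generalized Laguerre polynomial: the polynomial agreeing with the
  Rodrigues expression on (0,\<infinity>), evaluated at x (so also at x = 0).\<close>
definition laguerre :: "real \<Rightarrow> real \<Rightarrow> nat \<Rightarrow> real \<Rightarrow> real" where
  "laguerre \<theta> \<beta> i x =
     poly (THE p :: real poly. \<forall>t>0. poly p t = laguerre_rodrigues \<theta> \<beta> i t) x"

definition laguerre_frac :: "(real \<Rightarrow> real) \<Rightarrow> real \<Rightarrow> real \<Rightarrow> nat \<Rightarrow> real \<Rightarrow> real" where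
  "laguerre_frac \<rho> \<theta> \<beta> i x =
     (1 / Gamma (\<rho> x)) * integral {0..x} (\<lambda>t. (x - t) powr (\<rho> x - 1) * laguerre \<theta> \<beta> i t)"

end

theory Submission
  imports Defs
begin

(* The Beta integral gives I^r t^k = k! x^(k+r) / Gamma(k+r+1), so on polynomials the
   Riemann-Liouville integral I^r is an explicit linear functional. It satisfies
   x I^r p = I^r (t p) + r I^(r+1) p  and  I^(r+1) p' = I^r p - p(0) x^r / Gamma(r+1).
   Applying I^r to the three-term recurrence
   (i+1) L_(i+1) = (2i+theta+1-beta t) L_i - (i+theta) L_(i-1)
   and eliminating I^(r+1) L_i by means of L_(i+1)' - L_i' = -beta L_i yields the claim.
   The three-term recurrence itself combines that derivative relation with
   t L_(i+1)' = (i+1) L_(i+1) - (i+1+theta) L_i; both are read off the coefficients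
   binom(i+theta, i-k) (-beta)^k / k! of L_i, which come from the Rodrigues formula. *)

lemma has_integral_Riemann_Liouville_power:
  fixes x r :: real
  assumes x: "x > 0" and r: "r > 0"
  shows "((\<lambda>t. (x - t) powr (r - 1) * t ^ k) has_integral
           fact k * Gamma r * x powr (real k + r) / Gamma (real k + r + 1)) {0..x}"
proof -
  define f where "f u = u powr (real k + 1 - 1) * (1 - u) powr (r - 1)" for u :: real
  have "(f has_integral Beta (real k + 1) r) {0..1}"
    unfolding f_def by (rule has_integral_Beta_real) (use r in auto)
  from has_integral_stretch_real[OF this, of "1 / x"]
  have "((\<lambda>t. f (t / x)) has_integral x * Beta (real k + 1) r) ((\<lambda>u. x * u) ` {0..1})"
    using x by (simp add: mult.commute)
  also have "(\<lambda>u. x * u) ` {0..1} = {0..x}"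
    using x by (auto simp: image_iff field_simps intro!: bexI[where x="_ / x"])
  finally have "((\<lambda>t. x powr (real k + r - 1) * f (t / x)) has_integral
                  x powr (real k + r - 1) * (x * Beta (real k + 1) r)) {0..x}"
    by (rule has_integral_mult_right)
  moreover have "x powr (real k + r - 1) * f (t / x) = (x - t) powr (r - 1) * t ^ k"
    if "t \<in> {0..x} - {0, x}" for t
  proof -
    from that have t: "0 < t" "t < x" by auto
    have "f (t / x) = (t / x) powr real k * ((x - t) / x) powr (r - 1)"
      unfolding f_def using x by (simp add: diff_divide_distrib)
    also have "\<dots> = t ^ k / x powr real k * ((x - t) powr (r - 1) / x powr (r - 1))"
      using t x by (simp add: powr_divide powr_realpow)
    finally have "f (t / x) = \<dots>" .
    moreover have "x powr (real k + r - 1) = x powr real k * x powr (r - 1)"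
      using x by (simp add: powr_add[symmetric] add_diff_eq)
    ultimately show ?thesis using x by (simp add: field_simps)
  qed
  moreover have "x powr (real k + r - 1) * (x * Beta (real k + 1) r)
      = fact k * Gamma r * x powr (real k + r) / Gamma (real k + r + 1)"
    using x by (simp add: Beta_def Gamma_fact powr_diff add_ac)
  ultimately show ?thesis
    by (metis (no_types, lifting) has_integral_spike_finite finite.emptyI finite_insert)
qed

definition rl_integral_poly :: "real \<Rightarrow> real \<Rightarrow> real poly \<Rightarrow> real" where
  "rl_integral_poly r x p =
     (\<Sum>k\<le>degree p. coeff p k * fact k * x powr (real k + r) / Gamma (real k + r + 1))"

lemma rl_integral_poly_conv_sum:
  assumes "degree p \<le> N"
  shows "rl_integral_poly r x p =
           (\<Sum>k\<le>N. coeff p k * fact k * x powr (real k + r) / Gamma (real k + r + 1))"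
  unfolding rl_integral_poly_def
  by (rule sum.mono_neutral_left) (use assms in \<open>auto simp: coeff_eq_0\<close>)

lemma has_integral_rl_integral_poly:
  fixes x r :: real
  assumes "x > 0" and "r > 0"
  shows "((\<lambda>t. (x - t) powr (r - 1) * poly p t) has_integral Gamma r * rl_integral_poly r x p) {0..x}"
proof -
  have "((\<lambda>t. \<Sum>k\<le>degree p. coeff p k * ((x - t) powr (r - 1) * t ^ k)) has_integral
          (\<Sum>k\<le>degree p. coeff p k * (fact k * Gamma r * x powr (real k + r) / Gamma (real k + r + 1))))
          {0..x}"
    by (intro has_integral_sum has_integral_mult_right has_integral_Riemann_Liouville_power assms) auto
  then show ?thesis
    by (simp add: rl_integral_poly_def poly_altdef sum_distrib_left mult_ac)
qed

lemma rl_integral_poly_add: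
  "rl_integral_poly r x (p + q) = rl_integral_poly r x p + rl_integral_poly r x q"
proof -
  define N where "N = max (degree p) (degree q)"
  have "degree (p + q) \<le> N" "degree p \<le> N" "degree q \<le> N"
    unfolding N_def by (auto intro: degree_add_le)
  then show ?thesis
    by (simp only: rl_integral_poly_conv_sum) (simp add: sum.distrib add_divide_distrib distrib_right)
qed

lemma rl_integral_poly_smult:
  "rl_integral_poly r x (smult c p) = c * rl_integral_poly r x p"
  by (simp add: rl_integral_poly_conv_sum[of "smult c p" "degree p"] rl_integral_poly_def
      sum_distrib_left mult_ac)

lemma rl_integral_poly_diff:
  "rl_integral_poly r x (p - q) = rl_integral_poly r x p - rl_integral_poly r x q"
proof -
  have "p - q = p + smult (-1) q" by simp
  then show ?thesis
    by (simp only: rl_integral_poly_add rl_integral_poly_smult)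
qed

lemma rl_integral_poly_pderiv:
  "rl_integral_poly (r + 1) x (pderiv p) = rl_integral_poly r x p - poly p 0 * x powr r / Gamma (r + 1)"
proof -
  have "rl_integral_poly r x p =
          poly p 0 * x powr r / Gamma (r + 1) +
          (\<Sum>k\<le>degree p. coeff p (Suc k) * fact (Suc k) * x powr (real (Suc k) + r) / Gamma (real (Suc k) + r + 1))"
    by (simp only: rl_integral_poly_conv_sum[of p "Suc (degree p)"] sum.atMost_Suc_shift)
       (simp add: poly_0_coeff_0)
  moreover have "rl_integral_poly (r + 1) x (pderiv p) =
          (\<Sum>k\<le>degree p. coeff p (Suc k) * fact (Suc k) * x powr (real (Suc k) + r) / Gamma (real (Suc k) + r + 1))"
    by (simp add: rl_integral_poly_conv_sum[of "pderiv p" "degree p"] degree_pderiv coeff_pderiv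
        algebra_simps)
  ultimately show ?thesis by simp
qed

lemma rl_integral_poly_pCons_0:
  fixes x r :: real
  assumes "x \<ge> 0" and "r > -1"
  shows "x * rl_integral_poly r x p = rl_integral_poly r x (pCons 0 p) + r * rl_integral_poly (r + 1) x p"
proof -
  have summand: "x * (c * fact k * x powr (real k + r) / Gamma (real k + r + 1)) =
      c * fact (Suc k) * x powr (real (Suc k) + r) / Gamma (real (Suc k) + r + 1)
      + r * (c * fact k * x powr (real k + (r + 1)) / Gamma (real k + (r + 1) + 1))" for c k
  proof -
    define g where "g = Gamma (real k + r + 1)"
    define y where "y = x powr (real k + r)"
    have pos: "real k + r + 1 > 0" "g > 0"
      using assms by (auto simp: g_def intro!: Gamma_real_pos)
    then have G: "Gamma (real (Suc k) + r + 1) = (real k + r + 1) * g"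
      "Gamma (real k + (r + 1) + 1) = (real k + r + 1) * g"
      using Gamma_plus1[of "real k + r + 1"] nonpos_Ints_nonpos[of "real k + r + 1"]
      by (auto simp: g_def add_ac)
    have X: "x powr (real (Suc k) + r) = x * y" "x powr (real k + (r + 1)) = x * y"
      using assms by (simp_all add: y_def powr_add add_ac)
    show ?thesis
      unfolding G X g_def[symmetric] y_def[symmetric] using pos
      by (simp add: divide_simps) (simp add: algebra_simps)
  qed
  have "rl_integral_poly r x (pCons 0 p) =
      (\<Sum>k\<le>degree p. coeff p k * fact (Suc k) * x powr (real (Suc k) + r) / Gamma (real (Suc k) + r + 1))"
    by (simp add: rl_integral_poly_conv_sum[of _ "Suc (degree p)"] degree_pCons_le sum.atMost_Suc_shift
        del: sum.atMost_Suc)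
  then show ?thesis
    unfolding rl_integral_poly_def[of r] rl_integral_poly_def[of "r + 1"] sum_distrib_left summand
    by (simp only: sum.distrib)
qed

fun rodrigues_poly :: "real \<Rightarrow> real \<Rightarrow> nat \<Rightarrow> real poly" where
  "rodrigues_poly b a 0 = 1"
| "rodrigues_poly b a (Suc m) =
     pCons 0 (pderiv (rodrigues_poly b a m)) + smult (a - real m) (rodrigues_poly b a m)
     - smult b (pCons 0 (rodrigues_poly b a m))"

lemma higher_deriv_powr_exp:
  assumes "t > 0"
  shows "(deriv ^^ m) (\<lambda>t. t powr a * exp (- b * t)) t =
           poly (rodrigues_poly b a m) t * t powr (a - real m) * exp (- b * t)"
  using assms
proof (induction m arbitrary: t)
  case 0
  then show ?case by simp
next
  case (Suc m)
  define P where "P = rodrigues_poly b a m"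
  define D where "D = poly (pderiv P) t * t powr (a - real m) * exp (- b * t)
     + poly P t * ((a - real m) * t powr (a - real m - 1)) * exp (- b * t)
     + poly P t * t powr (a - real m) * (exp (- b * t) * (- b))"
  have "((\<lambda>s. poly P s * s powr (a - real m) * exp (- b * s)) has_real_derivative D) (at t)"
    unfolding D_def using Suc.prems by (auto intro!: derivative_eq_intros simp: algebra_simps)
  then have "((deriv ^^ m) (\<lambda>t. t powr a * exp (- b * t)) has_real_derivative D) (at t)"
    by (rule has_field_derivative_transform_within_open[of _ _ _ "{0<..}"])
       (use Suc in \<open>auto simp: P_def\<close>)
  then have "(deriv ^^ Suc m) (\<lambda>t. t powr a * exp (- b * t)) t = D"
    by (simp add: DERIV_imp_deriv)
  also have "D = poly (rodrigues_poly b a (Suc m)) t * t powr (a - real (Suc m)) * exp (- b * t)"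
  proof -
    define q where "q = t powr (a - real (Suc m))"
    have "a - real m = 1 + (a - real (Suc m))"
      by simp
    then have "t powr (a - real m) = t * q" "t powr (a - real m - 1) = q"
      unfolding q_def using Suc.prems by (simp_all only: powr_add) (simp_all add: algebra_simps)
    then show ?thesis
      unfolding D_def P_def by (simp add: algebra_simps)
  qed
  finally show ?case .
qed

lemma gbinomial_mult_Suc: "(a - real k) * (a gchoose k) = real (Suc k) * (a gchoose Suc k)"
  using gbinomial_absorb_comp[of a k] gbinomial_absorption[of k a] by simp

lemma coeff_rodrigues_poly:
  "coeff (rodrigues_poly b a m) k = (if k \<le> m then fact m / fact k * (a gchoose (m - k)) * (- b) ^ k else 0)"
proof (induction m arbitrary: k)
  case 0
  then show ?case by (cases k) auto
next
  case (Suc m)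
  consider "k = 0" | j where "k = Suc j" "k \<le> m" | "k = Suc m" | "k > Suc m"
    by (cases k) (auto, metis Suc_leI linorder_neqE_nat)
  then show ?case
  proof cases
    case 1
    then show ?thesis
      using Suc.IH[of 0] gbinomial_mult_Suc[of a m] by (simp add: algebra_simps)
  next
    case 2
    define i where "i = m - k"
    define c :: real where "c = fact m / fact k"
    have m: "m = i + k"
      using 2 by (simp add: i_def)
    have IHk: "coeff (rodrigues_poly b a m) k = c * (a gchoose i) * (- b) ^ k"
      using 2 by (simp add: Suc.IH c_def i_def)
    have "fact m / fact j = real k * c" "m - j = Suc i"
      using 2 by (simp_all add: c_def i_def)
    then have IHj: "coeff (rodrigues_poly b a m) j = real k * c * (a gchoose Suc i) * (- b) ^ j"
      using 2 by (simp add: Suc.IH)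
    have "coeff (rodrigues_poly b a (Suc m)) k =
            (real k + a - real m) * coeff (rodrigues_poly b a m) k - b * coeff (rodrigues_poly b a m) j"
      using 2 by (simp add: coeff_pderiv algebra_simps)
    also have "\<dots> = ((a - real i) * (a gchoose i) + real k * (a gchoose Suc i)) * c * (- b) ^ k"
      unfolding IHk IHj using 2 by (simp add: m algebra_simps)
    also have "\<dots> = real (Suc m) * (a gchoose Suc i) * c * (- b) ^ k"
      unfolding gbinomial_mult_Suc m by (simp add: algebra_simps)
    finally have "coeff (rodrigues_poly b a (Suc m)) k = \<dots>" .
    moreover have "Suc m - k = Suc i"
      using 2 by (simp add: i_def)
    ultimately show ?thesis
      using 2 by (simp add: c_def)
  qed (simp_all add: Suc.IH coeff_pderiv coeff_pCons split: nat.split)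
qed

definition laguerre_poly :: "real \<Rightarrow> real \<Rightarrow> nat \<Rightarrow> real poly" where
  "laguerre_poly \<theta> \<beta> i = smult (1 / fact i) (rodrigues_poly \<beta> (real i + \<theta>) i)"

lemma coeff_laguerre_poly:
  "coeff (laguerre_poly \<theta> \<beta> i) k =
     (if k \<le> i then ((real i + \<theta>) gchoose (i - k)) * (- \<beta>) ^ k / fact k else 0)"
  by (simp add: laguerre_poly_def coeff_rodrigues_poly)

lemma poly_laguerre_poly_eq_rodrigues:
  assumes "t > 0"
  shows "poly (laguerre_poly \<theta> \<beta> i) t = laguerre_rodrigues \<theta> \<beta> i t"
proof -
  have "laguerre_rodrigues \<theta> \<beta> i t =
          1 / fact i * poly (rodrigues_poly \<beta> (real i + \<theta>) i) t
          * (t powr (- \<theta>) * t powr \<theta>) * (exp (\<beta> * t) * exp (- \<beta> * t))"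
    unfolding laguerre_rodrigues_def higher_deriv_powr_exp[OF assms] by (simp add: algebra_simps)
  also have "t powr (- \<theta>) * t powr \<theta> = 1"
    using assms by (simp add: powr_add[symmetric])
  also have "exp (\<beta> * t) * exp (- \<beta> * t) = 1"
    by (simp add: exp_add[symmetric])
  finally show ?thesis
    by (simp add: laguerre_poly_def)
qed

lemma laguerre_eq_poly: "laguerre \<theta> \<beta> i = poly (laguerre_poly \<theta> \<beta> i)"
proof -
  have "(THE p. \<forall>t>0. poly p t = laguerre_rodrigues \<theta> \<beta> i t) = laguerre_poly \<theta> \<beta> i"
  proof (rule the_equality)
    fix q assume q: "\<forall>t>0. poly q t = laguerre_rodrigues \<theta> \<beta> i t"
    have "{0<..} \<subseteq> {t. poly (q - laguerre_poly \<theta> \<beta> i) t = 0}"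
      using q poly_laguerre_poly_eq_rodrigues by auto
    then have "infinite {t. poly (q - laguerre_poly \<theta> \<beta> i) t = 0}"
      using infinite_Ioi infinite_super by blast
    then have "q - laguerre_poly \<theta> \<beta> i = 0"
      using poly_roots_finite by blast
    then show "q = laguerre_poly \<theta> \<beta> i"
      by simp
  qed (use poly_laguerre_poly_eq_rodrigues in blast)
  then show ?thesis
    unfolding laguerre_def by auto
qed

lemma pderiv_laguerre_poly_Suc:
  "pderiv (laguerre_poly \<theta> \<beta> (Suc i)) = pderiv (laguerre_poly \<theta> \<beta> i) - smult \<beta> (laguerre_poly \<theta> \<beta> i)"
proof (rule poly_eqI)
  fix k
  define a where "a = real i + \<theta>"
  consider "Suc k \<le> i" | "k = i" | "k > i"
    by linarith
  then show "coeff (pderiv (laguerre_poly \<theta> \<beta> (Suc i))) k =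
      coeff (pderiv (laguerre_poly \<theta> \<beta> i) - smult \<beta> (laguerre_poly \<theta> \<beta> i)) k"
  proof cases
    case 1
    define m where "m = i - Suc k"
    have "i - k = Suc m" "Suc i - Suc k = Suc m" "i - Suc k = m"
      using 1 by (auto simp: m_def)
    then have C: "coeff (laguerre_poly \<theta> \<beta> (Suc i)) (Suc k) = ((a + 1) gchoose Suc m) * (- \<beta>) ^ Suc k / fact (Suc k)"
      "coeff (laguerre_poly \<theta> \<beta> i) (Suc k) = (a gchoose m) * (- \<beta>) ^ Suc k / fact (Suc k)"
      "coeff (laguerre_poly \<theta> \<beta> i) k = (a gchoose Suc m) * (- \<beta>) ^ k / fact k"
      using 1 by (simp_all add: coeff_laguerre_poly a_def add_ac)
    show ?thesis
      unfolding coeff_pderiv coeff_diff coeff_smult C gbinomial_Suc_Suc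
      by (simp add: field_simps del: of_nat_Suc)
  qed (simp_all add: coeff_laguerre_poly coeff_pderiv)
qed

lemma coeff_pCons_0_pderiv: "coeff (pCons 0 (pderiv p)) k = of_nat k * coeff p k"
  by (cases k) (simp_all add: coeff_pderiv)

lemma pCons_0_pderiv_laguerre_poly_Suc:
  "pCons 0 (pderiv (laguerre_poly \<theta> \<beta> (Suc i))) =
     smult (real (Suc i)) (laguerre_poly \<theta> \<beta> (Suc i)) - smult (real (Suc i) + \<theta>) (laguerre_poly \<theta> \<beta> i)"
proof (rule poly_eqI)
  fix k
  define a where "a = real i + \<theta>"
  show "coeff (pCons 0 (pderiv (laguerre_poly \<theta> \<beta> (Suc i)))) k =
      coeff (smult (real (Suc i)) (laguerre_poly \<theta> \<beta> (Suc i)) - smult (real (Suc i) + \<theta>) (laguerre_poly \<theta> \<beta> i)) k"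
  proof (cases "k \<le> i")
    case True
    define m where "m = i - k"
    define q where "q = (- \<beta>) ^ k / fact k"
    have Suc_i: "real (Suc i) = real (Suc m) + real k"
      using True by (simp add: m_def)
    have "Suc i - k = Suc m"
      using True by (simp add: m_def)
    then have C: "coeff (laguerre_poly \<theta> \<beta> (Suc i)) k = ((a + 1) gchoose Suc m) * q"
      "coeff (laguerre_poly \<theta> \<beta> i) k = (a gchoose m) * q"
      using True by (simp_all add: coeff_laguerre_poly a_def m_def q_def add_ac)
    have "real k * (((a + 1) gchoose Suc m) * q) =
            real (Suc i) * (((a + 1) gchoose Suc m) * q) - real (Suc m) * ((a + 1) gchoose Suc m) * q"
      unfolding Suc_i by (simp add: algebra_simps)
    also have "real (Suc m) * ((a + 1) gchoose Suc m) = (real (Suc i) + \<theta>) * (a gchoose m)"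
      using gbinomial_absorption[of m "a + 1"] by (simp add: a_def add_ac)
    finally show ?thesis
      unfolding coeff_pCons_0_pderiv coeff_diff coeff_smult C by (simp add: mult_ac)
  qed (simp add: coeff_pCons_0_pderiv coeff_laguerre_poly)
qed

lemma laguerre_poly_three_term:
  assumes "i \<ge> 1"
  shows "smult (real i + 1) (laguerre_poly \<theta> \<beta> (i + 1)) =
           smult (2 * real i + \<theta> + 1) (laguerre_poly \<theta> \<beta> i)
           - smult \<beta> (pCons 0 (laguerre_poly \<theta> \<beta> i))
           - smult (real i + \<theta>) (laguerre_poly \<theta> \<beta> (i - 1))"
    (is "?lhs = ?rhs")
proof -
  obtain j where i: "i = Suc j"
    using assms by (cases i) auto
  have "pCons 0 (pderiv (laguerre_poly \<theta> \<beta> (Suc i))) - pCons 0 (pderiv (laguerre_poly \<theta> \<beta> i)) =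
          - smult \<beta> (pCons 0 (laguerre_poly \<theta> \<beta> i))"
    by (simp add: pderiv_laguerre_poly_Suc)
  then have difference:
    "smult (real (Suc i)) (laguerre_poly \<theta> \<beta> (Suc i)) - smult (real (Suc i) + \<theta>) (laguerre_poly \<theta> \<beta> i)
      - (smult (real (Suc j)) (laguerre_poly \<theta> \<beta> (Suc j)) - smult (real (Suc j) + \<theta>) (laguerre_poly \<theta> \<beta> j))
      = - smult \<beta> (pCons 0 (laguerre_poly \<theta> \<beta> i))"
    unfolding pCons_0_pderiv_laguerre_poly_Suc i .
  show ?thesis
  proof (rule poly_eqI)
    fix k
    from arg_cong[OF difference, of "\<lambda>p. coeff p k"] show "coeff ?lhs k = coeff ?rhs k"
      by (cases k) (simp_all add: i algebra_simps)
  qed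
qed

lemma rl_integral_laguerre_poly_recurrence:
  fixes x r :: real
  assumes "x \<ge> 0" and "r > 0" and "i \<ge> 1"
  shows "(real i + r + 1) * rl_integral_poly r x (laguerre_poly \<theta> \<beta> (i + 1)) =
           (2 * real i + \<theta> + r + 1 - \<beta> * x) * rl_integral_poly r x (laguerre_poly \<theta> \<beta> i)
           - (real i + \<theta>) * rl_integral_poly r x (laguerre_poly \<theta> \<beta> (i - 1))
           - x powr r / Gamma r *
               (poly (laguerre_poly \<theta> \<beta> i) 0 - poly (laguerre_poly \<theta> \<beta> (i + 1)) 0)"
proof -
  let ?L = "laguerre_poly \<theta> \<beta>"
  define w where "w = x powr r / Gamma (r + 1)"
  have "r \<notin> \<int>\<^sub>\<le>\<^sub>0"
    using assms(2) nonpos_Ints_nonpos by fastforce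
  then have w: "r * w = x powr r / Gamma r"
    using assms(2) by (simp add: w_def Gamma_plus1)
  have three_term: "(real i + 1) * rl_integral_poly r x (?L (i + 1)) =
      (2 * real i + \<theta> + 1) * rl_integral_poly r x (?L i) - \<beta> * rl_integral_poly r x (pCons 0 (?L i))
      - (real i + \<theta>) * rl_integral_poly r x (?L (i - 1))"
    using arg_cong[OF laguerre_poly_three_term[OF assms(3)], of "rl_integral_poly r x"]
    unfolding rl_integral_poly_diff rl_integral_poly_smult .
  have shift: "rl_integral_poly r x (pCons 0 (?L i)) =
      x * rl_integral_poly r x (?L i) - r * rl_integral_poly (r + 1) x (?L i)"
    using rl_integral_poly_pCons_0[of x r] assms by (simp add: algebra_simps)
  have deriv: "\<beta> * rl_integral_poly (r + 1) x (?L i) =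
      rl_integral_poly r x (?L i) - poly (?L i) 0 * w - (rl_integral_poly r x (?L (i + 1)) - poly (?L (i + 1)) 0 * w)"
    using arg_cong[OF pderiv_laguerre_poly_Suc[of \<theta> \<beta> i], of "rl_integral_poly (r + 1) x"]
    by (simp add: rl_integral_poly_diff rl_integral_poly_smult rl_integral_poly_pderiv w_def)
  have "\<beta> * rl_integral_poly r x (pCons 0 (?L i)) =
      \<beta> * x * rl_integral_poly r x (?L i) - r * (\<beta> * rl_integral_poly (r + 1) x (?L i))"
    unfolding shift by (simp add: algebra_simps)
  then show ?thesis
    using three_term unfolding deriv w[symmetric] by (simp add: algebra_simps)
qed

lemma laguerre_frac_eq_rl_integral_poly:
  assumes "x > 0" and "\<rho> x > 0"
  shows "laguerre_frac \<rho> \<theta> \<beta> i x = rl_integral_poly (\<rho> x) x (laguerre_poly \<theta> \<beta> i)"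
  using integral_unique[OF has_integral_rl_integral_poly[OF assms]] Gamma_real_pos[OF assms(2)]
  by (simp add: laguerre_frac_def laguerre_eq_poly)

lemma laguerre_poly_0: "laguerre_poly \<theta> \<beta> 0 = 1"
  by (rule poly_eqI) (simp add: coeff_laguerre_poly)

lemma laguerre_poly_1: "laguerre_poly \<theta> \<beta> 1 = [:\<theta> + 1, - \<beta>:]"
  by (rule poly_eqI) (simp add: coeff_laguerre_poly coeff_pCons add_ac split: nat.split)

lemma laguerre_frac_0:
  assumes "x > 0" and "\<rho> x > 0"
  shows "laguerre_frac \<rho> \<theta> \<beta> 0 x = x powr (\<rho> x) / Gamma (\<rho> x + 1)"
  by (simp add: laguerre_frac_eq_rl_integral_poly[of x \<rho>, OF assms] laguerre_poly_0 rl_integral_poly_def)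

lemma laguerre_frac_1:
  assumes "x > 0" and "\<rho> x > 0"
  shows "laguerre_frac \<rho> \<theta> \<beta> 1 x =
           (\<theta> + 1) * x powr (\<rho> x) / Gamma (\<rho> x + 1) - \<beta> * x powr (\<rho> x + 1) / Gamma (\<rho> x + 2)"
  unfolding laguerre_frac_eq_rl_integral_poly[of x \<rho>, OF assms] laguerre_poly_1
  by (simp add: rl_integral_poly_conv_sum[of _ 1] add_ac)

lemma laguerre_frac_recurrence:
  assumes "x > 0" and "\<rho> x > 0" and "i \<ge> 1"
  shows "laguerre_frac \<rho> \<theta> \<beta> (i + 1) x =
           (1 / (real i + \<rho> x + 1)) *
             ((2 * real i + \<theta> + \<rho> x + 1 - \<beta> * x) * laguerre_frac \<rho> \<theta> \<beta> i x
              - (real i + \<theta>) * laguerre_frac \<rho> \<theta> \<beta> (i - 1) x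
              - x powr (\<rho> x) / Gamma (\<rho> x) * (laguerre \<theta> \<beta> i 0 - laguerre \<theta> \<beta> (i + 1) 0))"
  using rl_integral_laguerre_poly_recurrence[of x "\<rho> x" i \<theta> \<beta>] assms
  by (simp add: laguerre_frac_eq_rl_integral_poly[of x \<rho>, OF assms(1,2)] laguerre_eq_poly field_simps)

theorem mainTheorem1:
  fixes \<theta> \<beta> \<rho>min \<rho>max :: real and n :: nat and \<rho> :: "real \<Rightarrow> real"
  assumes "\<theta> > -1" and "\<beta> > 0" and "n \<ge> 1"
    and "\<And>x. x > 0 \<Longrightarrow> real n - 1 < \<rho>min \<and> \<rho>min < \<rho> x \<and> \<rho> x < \<rho>max \<and> \<rho>max < real n"
  shows "\<forall>x>0.
     laguerre_frac \<rho> \<theta> \<beta> 0 x = x powr (\<rho> x) / Gamma (\<rho> x + 1)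
   \<and> laguerre_frac \<rho> \<theta> \<beta> 1 x =
       (\<theta> + 1) * x powr (\<rho> x) / Gamma (\<rho> x + 1) - \<beta> * x powr (\<rho> x + 1) / Gamma (\<rho> x + 2)
   \<and> (\<forall>i\<ge>1. laguerre_frac \<rho> \<theta> \<beta> (i + 1) x =
       (1 / (real i + \<rho> x + 1)) *
         ((2 * real i + \<theta> + \<rho> x + 1 - \<beta> * x) * laguerre_frac \<rho> \<theta> \<beta> i x
          - (real i + \<theta>) * laguerre_frac \<rho> \<theta> \<beta> (i - 1) x
          - x powr (\<rho> x) / Gamma (\<rho> x) * (laguerre \<theta> \<beta> i 0 - laguerre \<theta> \<beta> (i + 1) 0)))"
proof -
  have "real n \<ge> 1"
    using assms(3) by simp
  then have "\<rho> x > 0" if "x > 0" for x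
    using assms(4)[OF that] by linarith
  then show ?thesis
    using laguerre_frac_0 laguerre_frac_1 laguerre_frac_recurrence by blast
qed

end
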